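(* Let $\Gamma=(V,E)$ be a locally finite reflexive relation. If $F_1$ and $F_2$ are weak fragments of $\Gamma$ with $F_1\cap F_2\neq\emptyset$, then $F_1\cup F_2$ and $F_1\cap F_2$ are weak fragments. In particular, two distinct weak atoms are disjoint. Assume furthermore that $\Gamma$ is point-transitive. Then the weak atoms of $\Gamma$ form a partition of $V$, and for any weak atom $A$ the subrelation $\Gamma[A]$ induced on $A$ is point-transitive.
   Context: A relation is a pair $\Gamma=(V,E)$ with $E\subset V\times V$; for $X\subset V$, $\Gamma(X)=\{y: (x,y)\in E \text{ for some } x\in X\}$, $\Gamma^-(X)=\{y:(y,x)\in E\text{ for some }x\in X\}$, $\Gamma(x)=\Gamma(\{x\})$. $\Gamma$ is reflexive if $(x,x)\in E$ for all $x$, and locally finite if $\Gamma(x)$ and $\Gamma^-(x)$ are finite for all $x\in V$. Write $\partial(X)=\Gamma(X)\setminus X$. An automorphism is a bijection $f:V\to V$ with $\Gamma(f(x))=f(\Gamma(x))$ for all $x$; $\Gamma$ is point-transitive if for all $x,y\in V$ there is an automorphism $f$ with $f(x)=y$. The induced subrelation on $X$ is $\Gamma[X]=(X,(X\times X)\cap E)$. The weak connectivity is $\kappa(\Gamma)=\min\{|\partial(X)| : 1\le |X|<\infty\}$; a weak fragment is a set $X$ with $1\le|X|<\infty$ and $|\partial(X)|=\kappa(\Gamma)$; a weak atom is a weak fragment of minimum cardinality. *)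

theory Defs
  imports Main "HOL-Library.Disjoint_Sets"
begin

definition is_relation :: "'a set \<Rightarrow> ('a \<times> 'a) set \<Rightarrow> bool" where
  "is_relation V E \<longleftrightarrow> E \<subseteq> V \<times> V"

definition reflexive_rel :: "'a set \<Rightarrow> ('a \<times> 'a) set \<Rightarrow> bool" where
  "reflexive_rel V E \<longleftrightarrow> (\<forall>x\<in>V. (x, x) \<in> E)"

text \<open>Gamma(X) is E `` X, Gamma^-(X) is (E^-1) `` X.\<close>
definition locally_finite_rel :: "'a set \<Rightarrow> ('a \<times> 'a) set \<Rightarrow> bool" where
  "locally_finite_rel V E \<longleftrightarrow> (\<forall>x\<in>V. finite (E `` {x}) \<and> finite (E\<inverse> `` {x}))"

definition bdry :: "('a \<times> 'a) set \<Rightarrow> 'a set \<Rightarrow> 'a set" where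
  "bdry E X = E `` X - X"

definition automorphism :: "'a set \<Rightarrow> ('a \<times> 'a) set \<Rightarrow> ('a \<Rightarrow> 'a) \<Rightarrow> bool" where
  "automorphism V E f \<longleftrightarrow> bij_betw f V V \<and> (\<forall>x\<in>V. E `` {f x} = f ` (E `` {x}))"

definition point_transitive :: "'a set \<Rightarrow> ('a \<times> 'a) set \<Rightarrow> bool" where
  "point_transitive V E \<longleftrightarrow> (\<forall>x\<in>V. \<forall>y\<in>V. \<exists>f. automorphism V E f \<and> f x = y)"

definition weak_kappa :: "'a set \<Rightarrow> ('a \<times> 'a) set \<Rightarrow> nat" where
  "weak_kappa V E = Inf {card (bdry E X) | X. X \<subseteq> V \<and> finite X \<and> X \<noteq> {}}"

definition weak_fragment :: "'a set \<Rightarrow> ('a \<times> 'a) set \<Rightarrow> 'a set \<Rightarrow> bool" where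
  "weak_fragment V E X \<longleftrightarrow> X \<subseteq> V \<and> finite X \<and> X \<noteq> {} \<and> card (bdry E X) = weak_kappa V E"

definition weak_atom :: "'a set \<Rightarrow> ('a \<times> 'a) set \<Rightarrow> 'a set \<Rightarrow> bool" where
  "weak_atom V E X \<longleftrightarrow> weak_fragment V E X \<and> (\<forall>Y. weak_fragment V E Y \<longrightarrow> card X \<le> card Y)"

definition induced_edges :: "('a \<times> 'a) set \<Rightarrow> 'a set \<Rightarrow> ('a \<times> 'a) set" where
  "induced_edges E X = (X \<times> X) \<inter> E"

end

theory Submission
  imports Defs
begin

text \<open>
  For a reflexive locally finite relation, |\<partial>X| + |X| = |\<Gamma>(X)|, and X \<mapsto> |\<Gamma>(X)| is submodular
  because \<Gamma>(X \<union> Y) = \<Gamma>(X) \<union> \<Gamma>(Y) and \<Gamma>(X \<inter> Y) \<subseteq> \<Gamma>(X) \<inter> \<Gamma>(Y); as X \<mapsto> |X| is modular,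
  X \<mapsto> |\<partial>X| is submodular. For two intersecting weak fragments, |\<partial>(F1 \<union> F2)| and
  |\<partial>(F1 \<inter> F2)| are both at least \<kappa> and sum to at most 2\<kappa>, so both equal \<kappa>. Hence two
  intersecting weak atoms contain the weak fragment A \<inter> B of no larger size, so they coincide.
  Automorphisms map weak atoms to weak atoms; under point-transitivity the images of one atom
  cover V, and an automorphism moving a point of an atom A into A must fix A setwise, so it
  restricts to an automorphism of \<Gamma>[A].
\<close>

lemma finite_Image_locally_finite:
  assumes "locally_finite_rel V E" "X \<subseteq> V" "finite X"
  shows "finite (E `` X)"
proof -
  have "E `` X = (\<Union>x\<in>X. E `` {x})" by blast
  with assms show ?thesis by (auto simp: locally_finite_rel_def)
qed

lemma card_bdry_add_card:
  assumes "reflexive_rel V E" "locally_finite_rel V E" "X \<subseteq> V" "finite X"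
  shows "card (bdry E X) + card X = card (E `` X)"
proof -
  have sub: "X \<subseteq> E `` X" using assms(1,3) by (auto simp: reflexive_rel_def)
  have fin: "finite (E `` X)" using finite_Image_locally_finite assms(2-4) .
  have "card (bdry E X) = card (E `` X) - card X"
    unfolding bdry_def using card_Diff_subset[OF assms(4) sub] .
  moreover have "card X \<le> card (E `` X)" using card_mono[OF fin sub] .
  ultimately show ?thesis by simp
qed

lemma card_bdry_submodular:
  assumes "reflexive_rel V E" "locally_finite_rel V E"
    and "X \<subseteq> V" "finite X" "Y \<subseteq> V" "finite Y"
  shows "card (bdry E (X \<union> Y)) + card (bdry E (X \<inter> Y)) \<le> card (bdry E X) + card (bdry E Y)"
proof -
  note card_eq = card_bdry_add_card[OF assms(1,2)]
  have fin: "finite (E `` X)" "finite (E `` Y)"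
    using finite_Image_locally_finite assms(2-6) by blast+
  have UI: "X \<union> Y \<subseteq> V" "finite (X \<union> Y)" "X \<inter> Y \<subseteq> V" "finite (X \<inter> Y)"
    using assms(3-6) by auto
  have "card (E `` (X \<inter> Y)) \<le> card (E `` X \<inter> E `` Y)"
    using fin by (intro card_mono) auto
  moreover have "card (E `` (X \<union> Y)) + card (E `` X \<inter> E `` Y) = card (E `` X) + card (E `` Y)"
    using card_Un_Int[OF fin] by (simp add: Image_Un)
  moreover have "card (X \<union> Y) + card (X \<inter> Y) = card X + card Y"
    using card_Un_Int[OF assms(4,6)] by simp
  ultimately show ?thesis
    using card_eq[OF assms(3,4)] card_eq[OF assms(5,6)] card_eq[OF UI(1,2)] card_eq[OF UI(3,4)]
    by linarith
qed

lemma weak_kappa_le_card_bdry: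
  assumes "X \<subseteq> V" "finite X" "X \<noteq> {}"
  shows "weak_kappa V E \<le> card (bdry E X)"
  unfolding weak_kappa_def using assms by (intro cInf_lower) auto

lemma weak_fragment_Un_Int:
  assumes "reflexive_rel V E" "locally_finite_rel V E"
    and "weak_fragment V E F1" "weak_fragment V E F2" "F1 \<inter> F2 \<noteq> {}"
  shows "weak_fragment V E (F1 \<union> F2)" "weak_fragment V E (F1 \<inter> F2)"
proof -
  have F: "F1 \<subseteq> V" "finite F1" "F2 \<subseteq> V" "finite F2"
    and \<kappa>: "card (bdry E F1) = weak_kappa V E" "card (bdry E F2) = weak_kappa V E"
    using assms(3,4) unfolding weak_fragment_def by auto
  have "weak_kappa V E \<le> card (bdry E (F1 \<union> F2))" "weak_kappa V E \<le> card (bdry E (F1 \<inter> F2))"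
    using F assms(5) by (auto intro!: weak_kappa_le_card_bdry)
  with card_bdry_submodular[OF assms(1,2) F] \<kappa>
  have "card (bdry E (F1 \<union> F2)) = weak_kappa V E" "card (bdry E (F1 \<inter> F2)) = weak_kappa V E"
    by linarith+
  then show "weak_fragment V E (F1 \<union> F2)" "weak_fragment V E (F1 \<inter> F2)"
    using F assms(5) unfolding weak_fragment_def by auto
qed

lemma weak_atom_subset_finite_nonempty:
  "weak_atom V E A \<Longrightarrow> A \<subseteq> V \<and> finite A \<and> A \<noteq> {}"
  unfolding weak_atom_def weak_fragment_def by simp

lemma weak_atoms_disjoint:
  assumes "reflexive_rel V E" "locally_finite_rel V E"
    and A: "weak_atom V E A" and B: "weak_atom V E B" and "A \<noteq> B"
  shows "A \<inter> B = {}"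
proof (rule ccontr)
  assume "A \<inter> B \<noteq> {}"
  with A B have "weak_fragment V E (A \<inter> B)"
    by (intro weak_fragment_Un_Int(2)[OF assms(1,2)]) (auto simp: weak_atom_def)
  with A B have "card A \<le> card (A \<inter> B)" "card B \<le> card (A \<inter> B)"
    unfolding weak_atom_def by auto
  with A B have "A \<inter> B = A" "A \<inter> B = B"
    by (metis Int_lower1 Int_lower2 card_seteq weak_atom_subset_finite_nonempty)+
  with \<open>A \<noteq> B\<close> show False by simp
qed

lemma weak_fragment_exists:
  assumes "V \<noteq> {}"
  shows "\<exists>X. weak_fragment V E X"
proof -
  have "{card (bdry E X) | X. X \<subseteq> V \<and> finite X \<and> X \<noteq> {}} \<noteq> {}"
    using assms by blast
  from Inf_nat_def1[OF this] show ?thesis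
    unfolding weak_fragment_def weak_kappa_def by auto
qed

lemma weak_atom_exists:
  assumes "V \<noteq> {}"
  shows "\<exists>A. weak_atom V E A"
proof -
  let ?S = "{card Y | Y. weak_fragment V E Y}"
  have "?S \<noteq> {}" using weak_fragment_exists[OF assms] by blast
  from Inf_nat_def1[OF this] obtain A where A: "weak_fragment V E A" "card A = Inf ?S"
    by auto
  then have "card A \<le> card Y" if "weak_fragment V E Y" for Y
    using that by (auto intro!: cInf_lower)
  with A show ?thesis unfolding weak_atom_def by blast
qed

lemma automorphism_Image:
  assumes "automorphism V E f" "X \<subseteq> V"
  shows "E `` (f ` X) = f ` (E `` X)"
proof -
  have "E `` (f ` X) = (\<Union>x\<in>X. E `` {f x})" by blast
  also have "\<dots> = (\<Union>x\<in>X. f ` (E `` {x}))"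
    using assms unfolding automorphism_def by (auto intro!: SUP_cong)
  also have "\<dots> = f ` (E `` X)" by blast
  finally show ?thesis .
qed

lemma automorphism_bdry:
  assumes "is_relation V E" "automorphism V E f" "X \<subseteq> V"
  shows "bdry E (f ` X) = f ` bdry E X"
proof -
  have "inj_on f V" using assms(2) by (simp add: automorphism_def bij_betw_def)
  moreover have "E `` X \<subseteq> V" using assms(1) by (auto simp: is_relation_def)
  ultimately have "f ` (E `` X - X) = f ` (E `` X) - f ` X"
    using assms(3) by (intro inj_on_image_set_diff) auto
  then show ?thesis
    using automorphism_Image[OF assms(2,3)] by (simp add: bdry_def)
qed

lemma automorphism_weak_fragment:
  assumes "is_relation V E" "automorphism V E f" "weak_fragment V E X"
  shows "weak_fragment V E (f ` X)" "card (f ` X) = card X"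
proof -
  have XV: "X \<subseteq> V" using assms(3) by (simp add: weak_fragment_def)
  have inj: "inj_on f V" and "f ` V = V"
    using assms(2) by (auto simp: automorphism_def bij_betw_def)
  have "bdry E X \<subseteq> V" using assms(1) by (auto simp: bdry_def is_relation_def)
  then have "card (bdry E (f ` X)) = card (bdry E X)"
    using automorphism_bdry[OF assms(1,2) XV] inj by (metis card_image inj_on_subset)
  moreover show "card (f ` X) = card X"
    using inj XV by (metis card_image inj_on_subset)
  ultimately show "weak_fragment V E (f ` X)"
    using assms(3) XV \<open>f ` V = V\<close> unfolding weak_fragment_def by auto
qed

lemma automorphism_weak_atom:
  assumes "is_relation V E" "automorphism V E f" "weak_atom V E A"
  shows "weak_atom V E (f ` A)"
  using automorphism_weak_fragment[OF assms(1,2)] assms(3) unfolding weak_atom_def by auto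

lemma automorphism_induced:
  assumes "is_relation V E" "automorphism V E f" "A \<subseteq> V" "f ` A = A"
  shows "automorphism A (induced_edges E A) f"
proof -
  have inj: "inj_on f V" using assms(2) by (simp add: automorphism_def bij_betw_def)
  have "induced_edges E A `` {f z} = f ` (induced_edges E A `` {z})" if "z \<in> A" for z
  proof -
    have "E `` {z} \<subseteq> V" using assms(1) by (auto simp: is_relation_def)
    moreover have "E `` {f z} = f ` (E `` {z})"
      using assms(2,3) \<open>z \<in> A\<close> by (auto simp: automorphism_def)
    ultimately have "E `` {f z} \<inter> A = f ` (E `` {z} \<inter> A)"
      using inj assms(3,4) by (metis inj_on_image_Int)
    moreover have "f z \<in> A" using \<open>z \<in> A\<close> assms(4) by blast
    ultimately show ?thesis using \<open>z \<in> A\<close> by (auto simp: induced_edges_def)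
  qed
  moreover have "bij_betw f A A"
    using assms(3,4) inj by (auto simp: bij_betw_def intro: inj_on_subset)
  ultimately show ?thesis by (simp add: automorphism_def)
qed

lemma weak_atom_covers:
  assumes "is_relation V E" "point_transitive V E" "x \<in> V"
  shows "\<exists>A. weak_atom V E A \<and> x \<in> A"
proof -
  have "V \<noteq> {}" using assms(3) by blast
  then obtain A where A: "weak_atom V E A" using weak_atom_exists by metis
  then obtain a where a: "a \<in> A" "a \<in> V" using weak_atom_subset_finite_nonempty by blast
  then obtain f where f: "automorphism V E f" "f a = x"
    using assms(2,3) unfolding point_transitive_def by blast
  have "weak_atom V E (f ` A)" using automorphism_weak_atom[OF assms(1) f(1) A] .
  moreover have "x \<in> f ` A" using a f(2) by blast
  ultimately show ?thesis by blast
qed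

lemma weak_atoms_partition:
  assumes "is_relation V E" "reflexive_rel V E" "locally_finite_rel V E" "point_transitive V E"
  shows "partition_on V {A. weak_atom V E A}"
proof (rule partition_onI)
  show "\<Union> {A. weak_atom V E A} = V"
    using weak_atom_covers[OF assms(1,4)] weak_atom_subset_finite_nonempty by blast
  show "disjnt A B" if "A \<in> {A. weak_atom V E A}" "B \<in> {A. weak_atom V E A}" "A \<noteq> B" for A B
    using weak_atoms_disjoint[OF assms(2,3)] that by (simp add: disjnt_def)
  show "{} \<notin> {A. weak_atom V E A}"
    using weak_atom_subset_finite_nonempty by blast
qed

lemma weak_atom_induced_point_transitive:
  assumes "is_relation V E" "reflexive_rel V E" "locally_finite_rel V E" "point_transitive V E"
    and A: "weak_atom V E A"
  shows "point_transitive A (induced_edges E A)"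
  unfolding point_transitive_def
proof (intro ballI)
  fix x y assume "x \<in> A" "y \<in> A"
  have AV: "A \<subseteq> V" using weak_atom_subset_finite_nonempty[OF A] by blast
  obtain f where f: "automorphism V E f" "f x = y"
    using assms(4) \<open>x \<in> A\<close> \<open>y \<in> A\<close> AV unfolding point_transitive_def by blast
  have "weak_atom V E (f ` A)" using automorphism_weak_atom[OF assms(1) f(1) A] .
  moreover have "y \<in> f ` A \<inter> A" using f(2) \<open>x \<in> A\<close> \<open>y \<in> A\<close> by blast
  ultimately have "f ` A = A" using weak_atoms_disjoint[OF assms(2,3) _ A] by blast
  then show "\<exists>g. automorphism A (induced_edges E A) g \<and> g x = y"
    using automorphism_induced[OF assms(1) f(1) AV] f(2) by blast
qed

theorem proposition3p1:
  fixes V :: "'a set" and E :: "('a \<times> 'a) set"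
  assumes "is_relation V E" and "reflexive_rel V E" and "locally_finite_rel V E"
  shows "(\<forall>F1 F2. weak_fragment V E F1 \<and> weak_fragment V E F2 \<and> F1 \<inter> F2 \<noteq> {} \<longrightarrow>
            weak_fragment V E (F1 \<union> F2) \<and> weak_fragment V E (F1 \<inter> F2))
       \<and> (\<forall>A B. weak_atom V E A \<and> weak_atom V E B \<and> A \<noteq> B \<longrightarrow> A \<inter> B = {})
       \<and> (point_transitive V E \<longrightarrow>
            partition_on V {A. weak_atom V E A}
            \<and> (\<forall>A. weak_atom V E A \<longrightarrow> point_transitive A (induced_edges E A)))"
proof (intro conjI allI impI)
  fix F1 F2
  assume "weak_fragment V E F1 \<and> weak_fragment V E F2 \<and> F1 \<inter> F2 \<noteq> {}"
  then show "weak_fragment V E (F1 \<union> F2)" "weak_fragment V E (F1 \<inter> F2)"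
    using weak_fragment_Un_Int[OF assms(2,3)] by blast+
next
  fix A B
  assume "weak_atom V E A \<and> weak_atom V E B \<and> A \<noteq> B"
  then show "A \<inter> B = {}" using weak_atoms_disjoint[OF assms(2,3)] by blast
next
  assume "point_transitive V E"
  then show "partition_on V {A. weak_atom V E A}"
    and "weak_atom V E A \<Longrightarrow> point_transitive A (induced_edges E A)" for A
    using weak_atoms_partition[OF assms] weak_atom_induced_point_transitive[OF assms]
    by blast+
qed

end
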